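(* For every integer $k\ge0$ the formal power series $\psi_k(x):=-x^{2k}-\sum_{i\ge k}{i\brack k}x^{2i+1}$ is symplectic, and for $k\ge1$ it equals $\frac{1}{(2k-1)!}\sum_{i\ge1}(-1)^{i-1}E_{i-1}^{(2k-1)}(0)\,x^i$, where $E^{(2k-1)}$ denotes the $(2k-1)$-st derivative.
   Context: A formal power series $\varphi(x)=\sum_{i\ge0}\gamma_i x^i$ is called symplectic if for every $m\ge1$ one has $\sum_{k=0}^{m-1}(-1)^k\binom{m-1}{k}\gamma_{m+k}=0$. The Euler polynomials $E_n(x)$ are defined by $\frac{2e^{xt}}{e^t+1}=\sum_{n\ge0}E_n(x)\frac{t^n}{n!}$. For $n\ge0$ the integers ${n\brack i}$ are defined by $x\big(x^{2n}-E_{2n}(x)\big)=\sum_i {n\brack i}x^{2i}$; thus ${n\brack i}=0$ for $i\le0$ or $i>n$. *)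

theory Defs
  imports "HOL-Computational_Algebra.Computational_Algebra"
begin

definition symplectic :: "'a::comm_ring_1 fps \<Rightarrow> bool" where
  "symplectic \<phi> \<longleftrightarrow>
     (\<forall>m\<ge>1. (\<Sum>k=0..m-1. (-1)^k * of_nat ((m-1) choose k) * fps_nth \<phi> (m+k)) = 0)"

text \<open>Bivariate generating function 2 e^{xt}/(e^t+1), as a power series in t
  whose coefficients are real polynomials in x:
  e^{xt} = sum_n x^n t^n / n!, times 2/(e^t+1) (a real power series in t).\<close>
definition euler_gf :: "real poly fps" where
  "euler_gf = Abs_fps (\<lambda>n. monom (1 / fact n) n) *
              Abs_fps (\<lambda>n. [: fps_nth (fps_const 2 / (fps_exp 1 + 1)) n :])"

definition euler_poly :: "nat \<Rightarrow> real poly" where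
  "euler_poly n = smult (fact n) (fps_nth euler_gf n)"

definition ebracket :: "nat \<Rightarrow> nat \<Rightarrow> real" where
  "ebracket n i = coeff ([:0, 1:] * (monom 1 (2*n) - euler_poly (2*n))) (2*i)"

definition psi :: "nat \<Rightarrow> real fps" where
  "psi k = - (fps_X ^ (2*k))
           - Abs_fps (\<lambda>n. if odd n \<and> k \<le> n div 2 then ebracket (n div 2) k else 0)"

end

theory Submission imports Defs begin

text \<open>Write c(t) = 2/(e^t + 1), so that \<open>\<Sum>\<^sub>m\<close> E_m(x) t^m/m! = e^(xt) c(t).
  The identity c(-t) = e^t c(t) gives E_0(0) = 1, E_m(0) = 0 for even m > 0, and the
  reflection E_m(1 - x) = (-1)^m E_m(x). The first two facts show that the i-th coefficient
  of psi_k is (-1)^(i-1) [x^(2k-1)] E_(i-1), which is the Taylor formula of the second claim.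
  The alternating sum in the symplectic condition then becomes \<open>\<plusminus>\<close>[x^(2k-1)] S_n for
  S_n(x) = \<open>\<Sum>\<^sub>j\<close> C(n,j) E_(n+j)(x). Expanding E_m(x) umbrally around x + 1/2 turns S_n
  into the image of (y - 1/2)^n (y + 1/2)^n = (y^2 - 1/4)^n, an even polynomial, so only the
  values E_j(x + 1/2) with j even occur; these are even in x by the reflection. Hence S_n is
  even and its odd coefficients vanish.\<close>

definition euler0_egf :: "real fps" where
  "euler0_egf = fps_const 2 / (fps_exp 1 + 1)"

lemma euler0_egf_mult: "euler0_egf * (fps_exp 1 + 1) = fps_const 2"
proof -
  have nz: "(fps_exp 1 + 1 :: real fps) $ 0 \<noteq> 0" by simp
  have "euler0_egf = fps_const 2 * inverse (fps_exp 1 + 1)"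
    unfolding euler0_egf_def using fps_divide_unit[OF nz] by simp
  then have "euler0_egf * (fps_exp 1 + 1) =
             fps_const 2 * (inverse (fps_exp 1 + 1) * (fps_exp 1 + 1))"
    by (simp add: mult.assoc)
  then show ?thesis using inverse_mult_eq_1[OF nz] by simp
qed

lemma euler0_egf_reflect: "euler0_egf oo (-fps_X) = fps_exp 1 * euler0_egf"
proof -
  have X0: "(-fps_X :: real fps) $ 0 = 0" by simp
  have lhs: "(euler0_egf oo (-fps_X)) * (fps_exp (-1) + 1) = fps_const 2"
    using arg_cong[OF euler0_egf_mult, of "\<lambda>f. f oo (-fps_X)"]
    by (simp add: fps_compose_mult_distrib[OF X0] fps_compose_add_distrib)
  have "fps_exp (1::real) * fps_exp (-1) = 1"
    using fps_exp_add_mult[of "1::real" "-1"] by simp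
  then have rhs: "(fps_exp 1 * euler0_egf) * (fps_exp (-1) + 1) = fps_const 2"
    using euler0_egf_mult by (simp add: algebra_simps)
  have "(fps_exp (-1) + 1 :: real fps) $ 0 \<noteq> 0" by simp
  then have "(fps_exp (-1) + 1 :: real fps) \<noteq> 0" by force
  with lhs rhs show ?thesis by (metis mult_right_cancel)
qed

lemma euler0_egf_nth_reflect:
  "(-1) ^ m * euler0_egf $ m + euler0_egf $ m = (if m = 0 then 2 else 0)"
proof -
  have "(euler0_egf oo (-fps_X)) $ m + euler0_egf $ m = (euler0_egf * (fps_exp 1 + 1)) $ m"
    by (simp add: euler0_egf_reflect algebra_simps)
  then show ?thesis using euler0_egf_mult by (simp add: fps_compose_uminus')
qed

lemma euler0_egf_nth_0: "euler0_egf $ 0 = 1"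
  using euler0_egf_nth_reflect[of 0] by simp

lemma euler0_egf_nth_even: "even m \<Longrightarrow> m \<noteq> 0 \<Longrightarrow> euler0_egf $ m = 0"
  using euler0_egf_nth_reflect[of m] by simp

lemma euler_gf_nth:
  "euler_gf $ m = (\<Sum>i=0..m. monom (1 / fact i) i * [: euler0_egf $ (m - i) :])"
  by (simp add: euler_gf_def fps_mult_nth euler0_egf_def)

lemma poly_euler_poly: "poly (euler_poly m) x = fact m * (fps_exp x * euler0_egf) $ m"
  unfolding euler_poly_def euler_gf_nth fps_mult_nth fps_exp_nth
  by (simp add: poly_sum poly_monom sum_distrib_left mult_ac)

lemma coeff_euler_poly:
  "coeff (euler_poly m) j = (if j \<le> m then fact m / fact j * euler0_egf $ (m - j) else 0)"
proof -
  have "euler0_egf $ (m - i) * (if i = j then 1 / fact i else 0) =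
        (if i = j then euler0_egf $ (m - j) / fact j else 0)" for i
    by simp
  then show ?thesis
    by (simp add: euler_poly_def euler_gf_nth coeff_sum coeff_monom_mult)
qed

lemma coeff_euler_poly_self: "coeff (euler_poly m) m = 1"
  by (simp add: coeff_euler_poly euler0_egf_nth_0)

lemma coeff_euler_poly_eq_0:
  assumes "j \<noteq> m" and "even m \<longleftrightarrow> even j"
  shows "coeff (euler_poly m) j = 0"
  using assms euler0_egf_nth_even[of "m - j"] by (simp add: coeff_euler_poly)

lemma poly_euler_poly_reflect: "poly (euler_poly m) (1 - x) = (-1) ^ m * poly (euler_poly m) x"
proof -
  have X0: "(-fps_X :: real fps) $ 0 = 0" by simp
  have "fps_exp (1 - x) * euler0_egf = (fps_exp x * euler0_egf) oo (-fps_X)"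
    by (simp add: fps_compose_mult_distrib[OF X0] euler0_egf_reflect
                  fps_exp_add_mult[symmetric] algebra_simps)
  then show ?thesis by (simp add: poly_euler_poly fps_compose_uminus')
qed

lemma poly_euler_poly_shift:
  "poly (euler_poly m) (x + h) =
     (\<Sum>i=0..m. of_nat (m choose i) * h ^ i * poly (euler_poly (m - i)) x)"
proof -
  have "fps_exp (x + h) * euler0_egf = fps_exp h * (fps_exp x * euler0_egf)"
    by (simp add: fps_exp_add_mult algebra_simps)
  then have "poly (euler_poly m) (x + h) =
      (\<Sum>i=0..m. fact m * (h ^ i / fact i * (fps_exp x * euler0_egf) $ (m - i)))"
    by (simp only: poly_euler_poly fps_mult_nth fps_exp_nth of_nat_fact sum_distrib_left)
  also have "\<dots> = (\<Sum>i=0..m. of_nat (m choose i) * h ^ i * poly (euler_poly (m - i)) x)"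
  proof (rule sum.cong[OF refl])
    fix i assume "i \<in> {0..m}"
    then have "real (m choose i) = fact m / (fact i * fact (m - i))"
      using binomial_fact[of i m] by simp
    then show "fact m * (h ^ i / fact i * (fps_exp x * euler0_egf) $ (m - i)) =
               of_nat (m choose i) * h ^ i * poly (euler_poly (m - i)) x"
      by (simp add: poly_euler_poly field_simps)
  qed
  finally show ?thesis .
qed

lemma coeff_odd_eq_0_if_even_poly:
  fixes p :: "'a::{idom, ring_char_0} poly"
  assumes "\<And>x. poly p (-x) = poly p x" and "odd r"
  shows "coeff p r = 0"
proof -
  have "poly (pcompose p [:0, -1:]) = poly p" using assms(1) by (auto simp: poly_pcompose)
  then have "pcompose p [:0, -1:] = p" by (simp add: poly_eq_poly_eq_iff)
  then have "(-1) ^ r * coeff p r = coeff p r" by (metis coeff_pcompose_linear)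
  with assms(2) have "of_nat 2 * coeff p r = 0" by (simp add: algebra_simps)
  then show ?thesis by simp
qed

definition euler_umbral :: "nat \<Rightarrow> real \<Rightarrow> real poly \<Rightarrow> real" where
  "euler_umbral N x p = (\<Sum>j\<le>N. coeff p j * poly (euler_poly j) (x + 1/2))"

lemma euler_umbral_sum_smult:
  "euler_umbral N x (\<Sum>a\<in>A. smult (c a) (f a)) = (\<Sum>a\<in>A. c a * euler_umbral N x (f a))"
  unfolding euler_umbral_def
  by (induction A rule: infinite_finite_induct)
     (auto simp: sum.distrib sum_distrib_left algebra_simps)

lemma poly_euler_poly_umbral:
  assumes "m \<le> N"
  shows "poly (euler_poly m) x = euler_umbral N x ([:-(1/2), 1:] ^ m)"
proof -
  have "poly (euler_poly m) x = poly (euler_poly m) ((x + 1/2) + (-(1/2)))" by simp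
  also have "\<dots> = (\<Sum>j=0..m. of_nat (m choose j) * (-(1/2)) ^ (m - j) * poly (euler_poly j) (x + 1/2))"
    unfolding poly_euler_poly_shift
    by (subst sum.atLeastAtMost_rev) (auto intro!: sum.cong simp: binomial_symmetric[symmetric])
  also have "\<dots> = (\<Sum>j\<le>N. coeff ([:-(1/2), 1:] ^ m) j * poly (euler_poly j) (x + 1/2))"
  proof -
    have "{0..m} = {..N} \<inter> {j. j \<le> m}" using assms by auto
    then have "(\<Sum>j=0..m. of_nat (m choose j) * (-(1/2)) ^ (m - j) * poly (euler_poly j) (x + 1/2)) =
        (\<Sum>j\<le>N. if j \<le> m then of_nat (m choose j) * (-(1/2)) ^ (m - j) * poly (euler_poly j) (x + 1/2)
                  else 0)"
      by (simp add: sum.inter_restrict)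
    also have "\<dots> = (\<Sum>j\<le>N. coeff ([:-(1/2), 1:] ^ m) j * poly (euler_poly j) (x + 1/2))"
      by (rule sum.cong) (auto simp: coeff_linear_poly_power coeff_eq_0 degree_linear_power)
    finally show ?thesis .
  qed
  finally show ?thesis by (simp add: euler_umbral_def)
qed

lemma euler_umbral_uminus_of_even:
  assumes "\<And>j. odd j \<Longrightarrow> coeff q j = 0"
  shows "euler_umbral N (-x) q = euler_umbral N x q"
  unfolding euler_umbral_def
proof (rule sum.cong[OF refl])
  fix j
  have "even j \<Longrightarrow> poly (euler_poly j) (-x + 1/2) = poly (euler_poly j) (x + 1/2)"
    using poly_euler_poly_reflect[of j "x + 1/2"] by simp
  then show "coeff q j * poly (euler_poly j) (-x + 1/2) = coeff q j * poly (euler_poly j) (x + 1/2)"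
    using assms[of j] by (cases "even j") auto
qed

lemma binomial_sum_euler_poly_even:
  "(\<Sum>j\<le>n. of_nat (n choose j) * poly (euler_poly (n + j)) (-x)) =
   (\<Sum>j\<le>n. of_nat (n choose j) * poly (euler_poly (n + j)) x)"
proof -
  define y :: "real poly" where "y = [:-(1/2), 1:]"
  define q where "q = (\<Sum>j\<le>n. smult (of_nat (n choose j)) (y ^ (n + j)))"
  have umbral: "(\<Sum>j\<le>n. of_nat (n choose j) * poly (euler_poly (n + j)) z) = euler_umbral (2*n) z q"
    for z
    unfolding q_def euler_umbral_sum_smult y_def
    by (rule sum.cong) (auto simp: poly_euler_poly_umbral)
  have "(y + 1) ^ n = (\<Sum>j\<le>n. of_nat (n choose j) * y ^ j * 1 ^ (n - j))"
    by (rule binomial_ring)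
  then have "q = y ^ n * (y + 1) ^ n"
    by (simp add: q_def sum_distrib_left power_add of_nat_poly mult_ac)
  moreover have "poly y z = z - 1/2" "poly (y + 1) z = z + 1/2" for z
    by (simp_all add: y_def)
  ultimately have "poly q z = ((z - 1/2) * (z + 1/2)) ^ n" for z
    by (simp only: poly_mult poly_power power_mult_distrib)
  then have "poly q (-z) = poly q z" for z
    by (simp add: algebra_simps)
  then have "\<And>j. odd j \<Longrightarrow> coeff q j = 0"
    using coeff_odd_eq_0_if_even_poly by blast
  then show ?thesis unfolding umbral by (rule euler_umbral_uminus_of_even)
qed

lemma binomial_sum_coeff_euler_poly_odd:
  assumes "odd r"
  shows "(\<Sum>j\<le>n. of_nat (n choose j) * coeff (euler_poly (n + j)) r) = 0"
proof -
  define S where "S = (\<Sum>j\<le>n. smult (of_nat (n choose j)) (euler_poly (n + j)))"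
  have "poly S (-x) = poly S x" for x
    using binomial_sum_euler_poly_even by (simp add: S_def poly_sum)
  then have "coeff S r = 0" using coeff_odd_eq_0_if_even_poly assms by blast
  then show ?thesis by (simp add: S_def coeff_sum)
qed

lemma ebracket_eq_coeff_euler_poly:
  assumes "k \<ge> 1"
  shows "ebracket a k = - coeff (euler_poly (2*a)) (2*k - 1)"
proof -
  have "2*k = Suc (2*k - 1)" using assms by simp
  then have "ebracket a k = coeff (pCons 0 (monom 1 (2*a) - euler_poly (2*a))) (Suc (2*k - 1))"
    unfolding ebracket_def by simp
  then have "ebracket a k = coeff (monom 1 (2*a) - euler_poly (2*a)) (2*k - 1)"
    by (simp only: coeff_pCons_Suc)
  moreover have "2*a \<noteq> 2*k - 1" using assms by presburger
  ultimately show ?thesis by (simp add: coeff_monom)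
qed

lemma psi_nth_Suc:
  assumes "k \<ge> 1"
  shows "psi k $ Suc m = (-1) ^ m * coeff (euler_poly m) (2*k - 1)"
proof (cases "even m")
  case True
  then obtain a where a: "m = 2*a" by blast
  have "Suc m \<noteq> 2*k" using a by presburger
  then have "psi k $ Suc m = - (if k \<le> a then ebracket a k else 0)"
    using a by (simp add: psi_def)
  also have "\<dots> = (-1) ^ m * coeff (euler_poly m) (2*k - 1)"
    using assms a ebracket_eq_coeff_euler_poly[OF assms, of a]
    by (auto simp: coeff_euler_poly)
  finally show ?thesis .
next
  case False
  then have "psi k $ Suc m = - (if Suc m = 2*k then 1 else 0)"
    by (simp add: psi_def)
  moreover have "coeff (euler_poly m) (2*k - 1) = (if Suc m = 2*k then 1 else 0)"
  proof (cases "Suc m = 2*k")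
    case True
    then show ?thesis using coeff_euler_poly_self[of m] by (metis diff_Suc_1)
  next
    case False
    then show ?thesis using \<open>odd m\<close> assms by (simp add: coeff_euler_poly_eq_0)
  qed
  ultimately show ?thesis using \<open>odd m\<close> by simp
qed

lemma higher_pderiv_at_0_div_fact:
  fixes p :: "'a::field_char_0 poly"
  shows "poly ((pderiv ^^ r) p) 0 / fact r = coeff p r"
  by (simp add: poly_0_coeff_0 coeff_higher_pderiv pochhammer_fact[symmetric])

lemma psi_eq_euler_poly_derivs:
  assumes "k \<ge> 1"
  shows "psi k = Abs_fps (\<lambda>i. if i = 0 then 0 else
           (-1) ^ (i - 1) * poly ((pderiv ^^ (2*k - 1)) (euler_poly (i - 1))) 0 / fact (2*k - 1))"
proof (rule fps_ext)
  fix i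
  show "psi k $ i = Abs_fps (\<lambda>i. if i = 0 then 0 else
          (-1) ^ (i - 1) * poly ((pderiv ^^ (2*k - 1)) (euler_poly (i - 1))) 0 / fact (2*k - 1)) $ i"
  proof (cases i)
    case (Suc m)
    then show ?thesis
      using psi_nth_Suc[OF assms, of m] higher_pderiv_at_0_div_fact[of "2*k - 1" "euler_poly m"]
      by (simp add: times_divide_eq_right[symmetric] del: times_divide_eq_right)
  qed (use assms in \<open>simp add: psi_def\<close>)
qed

lemma symplectic_psi_pos:
  assumes "k \<ge> 1"
  shows "symplectic (psi k)"
  unfolding symplectic_def
proof (intro allI impI)
  fix m :: nat assume "m \<ge> 1"
  then obtain n where n: "m = Suc n" by (cases m) auto
  have sign: "(-1::real) ^ j * (-1) ^ (n + j) = (-1) ^ n" for j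
    by (simp add: power_add mult_ac flip: power_mult_distrib)
  have "(\<Sum>j=0..m-1. (-1) ^ j * of_nat ((m-1) choose j) * psi k $ (m + j)) =
        (-1) ^ n * (\<Sum>j\<le>n. of_nat (n choose j) * coeff (euler_poly (n + j)) (2*k - 1))"
    unfolding sum_distrib_left
  proof (rule sum.cong)
    show "{0..m-1} = {..n}" using n by auto
    fix j
    have "(-1) ^ j * of_nat (n choose j) * psi k $ (m + j) =
          ((-1) ^ j * (-1) ^ (n + j)) * (of_nat (n choose j) * coeff (euler_poly (n + j)) (2*k - 1))"
      by (simp add: n psi_nth_Suc[OF assms])
    then show "(-1) ^ j * of_nat ((m-1) choose j) * psi k $ (m + j) =
               (-1) ^ n * (of_nat (n choose j) * coeff (euler_poly (n + j)) (2*k - 1))"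
      by (simp only: sign n diff_Suc_1)
  qed
  also have "\<dots> = 0"
    using assms by (simp add: binomial_sum_coeff_euler_poly_odd)
  finally show "(\<Sum>j=0..m-1. (-1) ^ j * of_nat ((m-1) choose j) * psi k $ (m + j)) = 0" .
qed

lemma symplectic_psi_0: "symplectic (psi 0)"
proof -
  have "psi 0 $ i = (if i = 0 then -1 else 0)" for i
    by (simp add: psi_def ebracket_def)
  then show ?thesis by (simp add: symplectic_def)
qed

theorem lemma5p3:
  fixes k :: nat
  shows "symplectic (psi k) \<and>
    (k \<ge> 1 \<longrightarrow>
      psi k = Abs_fps (\<lambda>i. if i = 0 then 0 else
        (-1) ^ (i - 1) * poly ((pderiv ^^ (2*k - 1)) (euler_poly (i - 1))) 0 / fact (2*k - 1)))"
  using symplectic_psi_0 symplectic_psi_pos psi_eq_euler_poly_derivs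
  by (cases "k = 0") auto

end
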